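(* Let $D$ be a locally semicomplete digraph such that $S(D)$ is chordal and $D$ contains neither an induced directed cycle consisting of non-symmetric arcs nor any of the digraphs $F_a, F_b, F_c, F_d$ (described in the context) as an induced subdigraph. Suppose $(u,v,w)$ is a violating triple. Then: (1) if $uv$ is a non-symmetric arc, there exists a di-simplicial vertex $u'$ of $S(D)$ (possibly $u'=u$) such that $(u',v,w)$ is a violating triple and $u'v$ is a non-symmetric arc; (2) if $vw$ is a non-symmetric arc, there exists a di-simplicial vertex $w'$ of $S(D)$ (possibly $w'=w$) such that $(u,v,w')$ is a violating triple and $vw'$ is a non-symmetric arc.
   Context: Digraphs are finite, have no loops and no multiple arcs, but may contain digons; an arc lying in a digon is called symmetric, otherwise non-symmetric. $N^-(v)$ / $N^+(v)$ denote the sets of in-/out-neighbours of $v$. A vertex $v$ is di-simplicial if for every $u \in N^-(v)$ and $w \in N^+(v)$ with $u \neq w$, $uw$ is an arc. A digraph is chordal if every induced subdigraph contains a di-simplicial vertex. $S(D)$ is the spanning subdigraph of $D$ consisting of all symmetric arcs of $D$. A digraph is semicomplete if between any two distinct vertices there is at least one arc; $D$ is locally semicomplete if for every vertex $v$, both $N^-(v)$ and $N^+(v)$ induce semicomplete subdigraphs. A directed cycle $v_1\dots v_kv_1$ is induced if there is no arc between $v_i,v_j$ whenever $|i-j|\notin\{1,k-1\}$. A violating triple is an ordered triple $(u,v,w)$ of vertices where $v$ is a di-simplicial vertex of $S(D)$, $u \in N^-(v)$, $w \in N^+(v)$, $u \neq w$, and $uw$ is not an arc of $D$. The digraphs $F_a,F_b,F_c$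 have vertex set $\{1,2,3,4\}$ with symmetric arcs $1\leftrightarrow 3$ and $2 \leftrightarrow 4$, plus: $F_a$: non-symmetric arcs $1\to2$, $2\to3$, $4\to1$ and symmetric arc $3\leftrightarrow4$; $F_b$: non-symmetric arcs $1\to2$, $2\to3$, $3\to4$, $4\to1$; $F_c$: non-symmetric arcs $1\to2$, $2\to3$, $4\to3$, $4\to1$. $F_d$ is the directed 3-cycle $1\to2\to3\to1$ with all arcs non-symmetric. *)

theory Defs
  imports Main
begin

definition digraph :: "'a set \<Rightarrow> ('a \<times> 'a) set \<Rightarrow> bool" where
  "digraph V A \<longleftrightarrow> finite V \<and> A \<subseteq> V \<times> V \<and> (\<forall>v. (v, v) \<notin> A)"

definition in_nbrs :: "('a \<times> 'a) set \<Rightarrow> 'a \<Rightarrow> 'a set" where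
  "in_nbrs A v = {u. (u, v) \<in> A}"

definition out_nbrs :: "('a \<times> 'a) set \<Rightarrow> 'a \<Rightarrow> 'a set" where
  "out_nbrs A v = {w. (v, w) \<in> A}"

definition symmetric_arc :: "('a \<times> 'a) set \<Rightarrow> 'a \<Rightarrow> 'a \<Rightarrow> bool" where
  "symmetric_arc A x y \<longleftrightarrow> (x, y) \<in> A \<and> (y, x) \<in> A"

definition nonsymmetric_arc :: "('a \<times> 'a) set \<Rightarrow> 'a \<Rightarrow> 'a \<Rightarrow> bool" where
  "nonsymmetric_arc A x y \<longleftrightarrow> (x, y) \<in> A \<and> (y, x) \<notin> A"

text \<open>Arc set of S(D) (same vertex set as D).\<close>
definition sym_part :: "('a \<times> 'a) set \<Rightarrow> ('a \<times> 'a) set" where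
  "sym_part A = {(x, y). (x, y) \<in> A \<and> (y, x) \<in> A}"

definition di_simplicial :: "'a set \<Rightarrow> ('a \<times> 'a) set \<Rightarrow> 'a \<Rightarrow> bool" where
  "di_simplicial V A v \<longleftrightarrow> v \<in> V \<and>
     (\<forall>u \<in> in_nbrs A v. \<forall>w \<in> out_nbrs A v. u \<noteq> w \<longrightarrow> (u, w) \<in> A)"

definition chordal :: "'a set \<Rightarrow> ('a \<times> 'a) set \<Rightarrow> bool" where
  "chordal V A \<longleftrightarrow> (\<forall>X. X \<subseteq> V \<and> X \<noteq> {} \<longrightarrow> (\<exists>v. di_simplicial X (A \<inter> (X \<times> X)) v))"

definition semicomplete :: "'a set \<Rightarrow> ('a \<times> 'a) set \<Rightarrow> bool" where
  "semicomplete X A \<longleftrightarrow> (\<forall>x \<in> X. \<forall>y \<in> X. x \<noteq> y \<longrightarrow> (x, y) \<in> A \<or> (y, x) \<in> A)"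

definition locally_semicomplete :: "'a set \<Rightarrow> ('a \<times> 'a) set \<Rightarrow> bool" where
  "locally_semicomplete V A \<longleftrightarrow>
     (\<forall>v \<in> V. semicomplete (in_nbrs A v) A \<and> semicomplete (out_nbrs A v) A)"

definition induced_nonsym_cycle :: "'a set \<Rightarrow> ('a \<times> 'a) set \<Rightarrow> 'a list \<Rightarrow> bool" where
  "induced_nonsym_cycle V A vs \<longleftrightarrow>
     (let k = length vs in
       k \<ge> 2 \<and> distinct vs \<and> set vs \<subseteq> V \<and>
       (\<forall>i < k. nonsymmetric_arc A (vs ! i) (vs ! ((i + 1) mod k))) \<and>
       (\<forall>i < k. \<forall>j < k. i \<noteq> j \<and> \<not> (i + 1 = j \<or> j + 1 = i \<or> i + (k - 1) = j \<or> j + (k - 1) = i)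
            \<longrightarrow> (vs ! i, vs ! j) \<notin> A))"

definition has_induced :: "'a set \<Rightarrow> ('a \<times> 'a) set \<Rightarrow> nat \<Rightarrow> (nat \<times> nat) set \<Rightarrow> bool" where
  "has_induced V A n H \<longleftrightarrow> (\<exists>f. inj_on f {1..n} \<and> f ` {1..n} \<subseteq> V \<and>
     (\<forall>i \<in> {1..n}. \<forall>j \<in> {1..n}. (f i, f j) \<in> A \<longleftrightarrow> (i, j) \<in> H))"

definition F_a :: "(nat \<times> nat) set" where
  "F_a = {(1,3),(3,1),(2,4),(4,2),(1,2),(2,3),(4,1),(3,4),(4,3)}"

definition F_b :: "(nat \<times> nat) set" where
  "F_b = {(1,3),(3,1),(2,4),(4,2),(1,2),(2,3),(3,4),(4,1)}"

definition F_c :: "(nat \<times> nat) set" where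
  "F_c = {(1,3),(3,1),(2,4),(4,2),(1,2),(2,3),(4,3),(4,1)}"

definition F_d :: "(nat \<times> nat) set" where
  "F_d = {(1,2),(2,3),(3,1)}"

definition violating_triple :: "'a set \<Rightarrow> ('a \<times> 'a) set \<Rightarrow> 'a \<Rightarrow> 'a \<Rightarrow> 'a \<Rightarrow> bool" where
  "violating_triple V A u v w \<longleftrightarrow>
     di_simplicial V (sym_part A) v \<and> u \<in> in_nbrs A v \<and> w \<in> out_nbrs A v \<and>
     u \<noteq> w \<and> (u, w) \<notin> A"

end

theory Submission
  imports Defs
begin

(* Let X be the set of vertices x such that xv is a non-symmetric arc and xw is not an arc.
   Local semicompleteness and the excluded F_b, F_c, F_d force every S(D)-neighbour of a vertex
   of X to lie in X or to be S(D)-adjacent to w. So in the chordal graph S(D) induced on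
   W = X \<union> N[w], where N[w] is the closed S(D)-neighbourhood of w, the vertex u lies outside
   N[w], and a refinement of Dirac's lemma yields a simplicial vertex u' of S(D)[W] outside N[w].
   Then u' lies in X, and since its whole S(D)-neighbourhood lies in W, it is di-simplicial in
   S(D) itself. Part (2) is part (1) for the converse digraph: reversing all arcs preserves the
   hypotheses (F_b, F_c and F_d are isomorphic to their converses) and turns (u, v, w) into the
   violating triple (w, v, u). *)

definition simplicial :: "('a \<times> 'a) set \<Rightarrow> 'a set \<Rightarrow> 'a \<Rightarrow> bool" where
  "simplicial E W a \<longleftrightarrow> a \<in> W \<and>
     (\<forall>p\<in>W. \<forall>q\<in>W. (a, p) \<in> E \<longrightarrow> (a, q) \<in> E \<longrightarrow> p \<noteq> q \<longrightarrow> (p, q) \<in> E)"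

definition clique :: "('a \<times> 'a) set \<Rightarrow> 'a set \<Rightarrow> bool" where
  "clique E K \<longleftrightarrow> (\<forall>p\<in>K. \<forall>q\<in>K. p \<noteq> q \<longrightarrow> (p, q) \<in> E)"

lemma chordal_subset: "chordal V E \<Longrightarrow> W \<subseteq> V \<Longrightarrow> chordal W E"
  by (auto simp: chordal_def)

lemma chordal_simplicial:
  assumes "chordal W E" "sym E" "W \<noteq> {}"
  shows "\<exists>a. simplicial E W a"
proof -
  obtain a where "di_simplicial W (E \<inter> (W \<times> W)) a"
    using assms(1,3) unfolding chordal_def by blast
  then have "simplicial E W a"
    using assms(2) unfolding simplicial_def di_simplicial_def in_nbrs_def out_nbrs_def
    by (auto dest: symD)
  then show ?thesis ..
qed

lemma simplicial_Diff_nonadjacent: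
  assumes "simplicial E (W - {z}) a" "(a, z) \<notin> E"
  shows "simplicial E W a"
  using assms unfolding simplicial_def by blast

lemma simplicial_if_clique: "clique E W \<Longrightarrow> a \<in> W \<Longrightarrow> simplicial E W a"
  by (auto simp: clique_def simplicial_def)

lemma clique_closed_nbhd_simplicial:
  assumes "simplicial E W a" "sym E"
  shows "clique E {q \<in> W. q = a \<or> (a, q) \<in> E}"
  using assms unfolding simplicial_def clique_def sym_def by blast

lemma simplicial_outside_clique:
  assumes "finite W" "chordal W E" "sym E" "clique E K" "\<not> W \<subseteq> K"
  shows "\<exists>a \<in> W - K. simplicial E W a"
  using assms
proof (induction W arbitrary: K rule: finite_psubset_induct)
  case (psubset W)
  obtain z where z: "simplicial E W z"
    using chordal_simplicial[OF psubset.prems(1,2)] psubset.prems(4) by blast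
  then have "z \<in> W" by (simp add: simplicial_def)
  show ?case
  proof (cases "z \<in> K")
    case False
    with z \<open>z \<in> W\<close> show ?thesis by blast
  next
    case zK: True
    show ?thesis
    proof (cases "\<forall>p \<in> W. p = z \<or> (z, p) \<in> E")
      case universal: True
      then have "{q \<in> W. q = z \<or> (z, q) \<in> E} = W" by blast
      then have "clique E W" using clique_closed_nbhd_simplicial[OF z psubset.prems(2)] by simp
      obtain p where "p \<in> W" "p \<notin> K" using psubset.prems(4) by blast
      with simplicial_if_clique[OF \<open>clique E W\<close>] show ?thesis by blast
    next
      case False
      then obtain p where p: "p \<in> W" "p \<noteq> z" "(z, p) \<notin> E" by blast
      let ?K = "{q \<in> W - {z}. (z, q) \<in> E}"
      have "clique E ?K" using z unfolding simplicial_def clique_def by blast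
      moreover have "W - {z} \<subset> W" using \<open>z \<in> W\<close> by blast
      moreover have "\<not> W - {z} \<subseteq> ?K" using p by blast
      moreover have "chordal (W - {z}) E" using chordal_subset[OF psubset.prems(1)] by blast
      ultimately obtain a where a: "a \<in> W - {z} - ?K" "simplicial E (W - {z}) a"
        using psubset.IH[of "W - {z}" ?K] psubset.prems(2) by blast
      then have "a \<in> W" "a \<noteq> z" "(z, a) \<notin> E" by auto
      then have "(a, z) \<notin> E" using psubset.prems(2) by (metis symD)
      with a(2) have "simplicial E W a" by (rule simplicial_Diff_nonadjacent)
      moreover have "a \<notin> K"
        using zK \<open>a \<noteq> z\<close> \<open>(z, a) \<notin> E\<close> psubset.prems(3) unfolding clique_def by metis
      ultimately show ?thesis using \<open>a \<in> W\<close> by blast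
    qed
  qed
qed

lemma simplicial_outside_closed_nbhd:
  assumes "finite W" "chordal W E" "sym E" "w \<in> W" "p \<in> W" "p \<noteq> w" "(w, p) \<notin> E"
  shows "\<exists>a \<in> W. a \<noteq> w \<and> (w, a) \<notin> E \<and> simplicial E W a"
  using assms
proof (induction W rule: finite_psubset_induct)
  case (psubset W)
  obtain z where z: "simplicial E W z"
    using chordal_simplicial[OF psubset.prems(1,2)] psubset.prems(3) by blast
  then have "z \<in> W" by (simp add: simplicial_def)
  consider "z \<noteq> w" "(w, z) \<notin> E" | "z = w" | "z \<noteq> w" "(w, z) \<in> E" by blast
  then show ?case
  proof cases
    case 1
    with z \<open>z \<in> W\<close> show ?thesis by blast
  next
    case 2
    let ?K = "{q \<in> W. q = w \<or> (w, q) \<in> E}"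
    have "clique E ?K"
      using clique_closed_nbhd_simplicial[OF z psubset.prems(2)] 2 by simp
    moreover have "\<not> W \<subseteq> ?K" using psubset.prems(4-6) by blast
    ultimately have "\<exists>a \<in> W - ?K. simplicial E W a"
      by (rule simplicial_outside_clique[OF psubset.hyps(1) psubset.prems(1,2)])
    then show ?thesis by blast
  next
    case 3
    have "W - {z} \<subset> W" "chordal (W - {z}) E" "w \<in> W - {z}" "p \<in> W - {z}"
      using \<open>z \<in> W\<close> 3 psubset.prems chordal_subset[OF psubset.prems(1)] by auto
    then obtain a where a: "a \<in> W - {z}" "a \<noteq> w" "(w, a) \<notin> E" "simplicial E (W - {z}) a"
      using psubset.IH[of "W - {z}"] psubset.prems(2,5,6) by blast
    have "(a, z) \<notin> E"
    proof
      assume "(a, z) \<in> E"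
      then have "(z, a) \<in> E" using psubset.prems(2) by (metis symD)
      moreover have "(z, w) \<in> E" using 3 psubset.prems(2) by (metis symD)
      ultimately have "(w, a) \<in> E" using z a(1,2) psubset.prems(3) unfolding simplicial_def by blast
      with a(3) show False by contradiction
    qed
    with a(4) have "simplicial E W a" by (rule simplicial_Diff_nonadjacent)
    with a(1-3) show ?thesis by blast
  qed
qed

lemma sym_sym_part: "sym (sym_part A)"
  by (auto simp: sym_def sym_part_def)

lemma di_simplicial_if_simplicial:
  assumes "simplicial E W a" "sym E" "W \<subseteq> V" "{p. (a, p) \<in> E} \<subseteq> W"
  shows "di_simplicial V E a"
  unfolding di_simplicial_def in_nbrs_def out_nbrs_def
proof (intro conjI ballI impI)
  show "a \<in> V" using assms(1,3) by (auto simp: simplicial_def)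
  fix p q assume "p \<in> {p. (p, a) \<in> E}" "q \<in> {q. (a, q) \<in> E}" "p \<noteq> q"
  then have "(a, p) \<in> E" "(a, q) \<in> E" using assms(2) by (auto dest: symD)
  with assms(1,4) \<open>p \<noteq> q\<close> show "(p, q) \<in> E" unfolding simplicial_def by blast
qed

lemma digraph_arcD:
  assumes "digraph V A" "(x, y) \<in> A"
  shows "x \<in> V" "y \<in> V" "x \<noteq> y"
  using assms unfolding digraph_def by auto

lemma has_induced_of_list:
  assumes "distinct xs" "set xs \<subseteq> V" "length xs = n"
    "\<forall>i \<in> {1..n}. \<forall>j \<in> {1..n}. (xs ! (i - 1), xs ! (j - 1)) \<in> A \<longleftrightarrow> (i, j) \<in> H"
  shows "has_induced V A n H"
  unfolding has_induced_def
proof (intro exI conjI)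
  show "inj_on (\<lambda>i. xs ! (i - 1)) {1..n}"
    using assms(1,3) by (auto simp: inj_on_def nth_eq_iff_index_eq)
  show "(\<lambda>i. xs ! (i - 1)) ` {1..n} \<subseteq> V"
    using assms(2,3) by (auto simp: subset_iff)
qed (fact assms(4))

lemma has_induced_F_bI:
  assumes "digraph V A"
    "nonsymmetric_arc A a b" "nonsymmetric_arc A b c" "nonsymmetric_arc A c d" "nonsymmetric_arc A d a"
    "symmetric_arc A a c" "symmetric_arc A b d"
  shows "has_induced V A 4 F_b"
proof -
  have loops: "(x, x) \<notin> A" for x using assms(1) by (auto simp: digraph_def)
  have arcs: "(a, b) \<in> A" "(b, a) \<notin> A" "(b, c) \<in> A" "(c, b) \<notin> A" "(c, d) \<in> A" "(d, c) \<notin> A"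
    "(d, a) \<in> A" "(a, d) \<notin> A" "(a, c) \<in> A" "(c, a) \<in> A" "(b, d) \<in> A" "(d, b) \<in> A"
    using assms(2-) unfolding nonsymmetric_arc_def symmetric_arc_def by auto
  have "distinct [a, b, c, d]" using arcs loops by auto
  moreover have "set [a, b, c, d] \<subseteq> V" using arcs digraph_arcD[OF assms(1)] by auto
  moreover have "{1..4::nat} = {1, 2, 3, 4}" by auto
  ultimately show ?thesis
    by (intro has_induced_of_list[where xs = "[a, b, c, d]"]) (simp_all add: F_b_def arcs loops)
qed

lemma has_induced_F_cI:
  assumes "digraph V A"
    "nonsymmetric_arc A a b" "nonsymmetric_arc A b c" "nonsymmetric_arc A d c" "nonsymmetric_arc A d a"
    "symmetric_arc A a c" "symmetric_arc A b d"
  shows "has_induced V A 4 F_c"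
proof -
  have loops: "(x, x) \<notin> A" for x using assms(1) by (auto simp: digraph_def)
  have arcs: "(a, b) \<in> A" "(b, a) \<notin> A" "(b, c) \<in> A" "(c, b) \<notin> A" "(d, c) \<in> A" "(c, d) \<notin> A"
    "(d, a) \<in> A" "(a, d) \<notin> A" "(a, c) \<in> A" "(c, a) \<in> A" "(b, d) \<in> A" "(d, b) \<in> A"
    using assms(2-) unfolding nonsymmetric_arc_def symmetric_arc_def by auto
  have "distinct [a, b, c, d]" using arcs loops by auto
  moreover have "set [a, b, c, d] \<subseteq> V" using arcs digraph_arcD[OF assms(1)] by auto
  moreover have "{1..4::nat} = {1, 2, 3, 4}" by auto
  ultimately show ?thesis
    by (intro has_induced_of_list[where xs = "[a, b, c, d]"]) (simp_all add: F_c_def arcs loops)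
qed

lemma has_induced_F_dI:
  assumes "digraph V A" "nonsymmetric_arc A a b" "nonsymmetric_arc A b c" "nonsymmetric_arc A c a"
  shows "has_induced V A 3 F_d"
proof -
  have loops: "(x, x) \<notin> A" for x using assms(1) by (auto simp: digraph_def)
  have arcs: "(a, b) \<in> A" "(b, a) \<notin> A" "(b, c) \<in> A" "(c, b) \<notin> A" "(c, a) \<in> A" "(a, c) \<notin> A"
    using assms(2-) unfolding nonsymmetric_arc_def by auto
  have "distinct [a, b, c]" using arcs loops by auto
  moreover have "set [a, b, c] \<subseteq> V" using arcs digraph_arcD[OF assms(1)] by auto
  moreover have "{1..3::nat} = {1, 2, 3}" by auto
  ultimately show ?thesis
    by (intro has_induced_of_list[where xs = "[a, b, c]"]) (simp_all add: F_d_def arcs loops)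
qed

lemma has_induced_converse: "has_induced V (A\<inverse>) n H \<longleftrightarrow> has_induced V A n (H\<inverse>)"
  unfolding has_induced_def converse_iff by (intro ex_cong1 conj_cong refl) blast

lemma has_induced_relabel:
  assumes "has_induced V A n H" "inj_on \<sigma> {1..n}" "\<sigma> ` {1..n} \<subseteq> {1..n}"
    "\<forall>i \<in> {1..n}. \<forall>j \<in> {1..n}. (\<sigma> i, \<sigma> j) \<in> H \<longleftrightarrow> (i, j) \<in> H'"
  shows "has_induced V A n H'"
proof -
  obtain f where f: "inj_on f {1..n}" "f ` {1..n} \<subseteq> V"
    "\<forall>i \<in> {1..n}. \<forall>j \<in> {1..n}. (f i, f j) \<in> A \<longleftrightarrow> (i, j) \<in> H"
    using assms(1) unfolding has_induced_def by blast
  have "inj_on (f \<circ> \<sigma>) {1..n}"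
    using f(1) assms(2,3) by (simp add: comp_inj_on inj_on_subset)
  moreover have "(f \<circ> \<sigma>) ` {1..n} \<subseteq> V" using f(2) assms(3) by (auto simp: image_comp[symmetric])
  moreover have "\<forall>i \<in> {1..n}. \<forall>j \<in> {1..n}. ((f \<circ> \<sigma>) i, (f \<circ> \<sigma>) j) \<in> A \<longleftrightarrow> (i, j) \<in> H'"
    using f(3) assms(3,4) by (auto simp: image_subset_iff)
  ultimately show ?thesis unfolding has_induced_def by blast
qed

lemma has_induced_converse_if_self_dual:
  assumes "inj_on \<sigma> {1..n}" "\<sigma> ` {1..n} \<subseteq> {1..n}"
    "\<forall>i \<in> {1..n}. \<forall>j \<in> {1..n}. (\<sigma> j, \<sigma> i) \<in> H \<longleftrightarrow> (i, j) \<in> H"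
  shows "has_induced V (A\<inverse>) n H \<longleftrightarrow> has_induced V A n H"
proof
  assume "has_induced V (A\<inverse>) n H"
  then have "has_induced V A n (H\<inverse>)" by (simp add: has_induced_converse)
  then show "has_induced V A n H"
    by (rule has_induced_relabel[OF _ assms(1,2)]) (use assms(3) in simp)
next
  assume "has_induced V A n H"
  then have "has_induced V A n (H\<inverse>)"
    by (rule has_induced_relabel[OF _ assms(1,2)]) (use assms(3) in auto)
  then show "has_induced V (A\<inverse>) n H" by (simp add: has_induced_converse)
qed

lemma has_induced_converse_F_b [simp]: "has_induced V (A\<inverse>) 4 F_b \<longleftrightarrow> has_induced V A 4 F_b"
proof -
  have "{1..4::nat} = {1, 2, 3, 4}" by auto
  then show ?thesis
    by (intro has_induced_converse_if_self_dual[where \<sigma> = "\<lambda>i. 5 - i"]) (simp_all add: F_b_def)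
qed

lemma has_induced_converse_F_c [simp]: "has_induced V (A\<inverse>) 4 F_c \<longleftrightarrow> has_induced V A 4 F_c"
proof -
  have "{1..4::nat} = {1, 2, 3, 4}" by auto
  then show ?thesis
    by (intro has_induced_converse_if_self_dual[where \<sigma> = "\<lambda>i. if odd i then i + 1 else i - 1"])
      (simp_all add: F_c_def)
qed

lemma has_induced_converse_F_d [simp]: "has_induced V (A\<inverse>) 3 F_d \<longleftrightarrow> has_induced V A 3 F_d"
proof -
  have "{1..3::nat} = {1, 2, 3}" by auto
  then show ?thesis
    by (intro has_induced_converse_if_self_dual[where \<sigma> = "\<lambda>i. if i = 3 then 3 else 3 - i"])
      (simp_all add: F_d_def)
qed

lemma locally_semicomplete_out_nbrsD:
  assumes "locally_semicomplete V A" "x \<in> V" "(x, a) \<in> A" "(x, b) \<in> A" "a \<noteq> b"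
  shows "(a, b) \<in> A \<or> (b, a) \<in> A"
  using assms unfolding locally_semicomplete_def semicomplete_def out_nbrs_def by blast

lemma locally_semicomplete_in_nbrsD:
  assumes "locally_semicomplete V A" "x \<in> V" "(a, x) \<in> A" "(b, x) \<in> A" "a \<noteq> b"
  shows "(a, b) \<in> A \<or> (b, a) \<in> A"
  using assms unfolding locally_semicomplete_def semicomplete_def in_nbrs_def by blast

lemma di_simplicial_sym_partD:
  assumes "di_simplicial V (sym_part A) v" "symmetric_arc A v p" "symmetric_arc A v q" "p \<noteq> q"
  shows "(p, q) \<in> A"
  using assms unfolding di_simplicial_def in_nbrs_def out_nbrs_def sym_part_def symmetric_arc_def
  by blast

lemma violating_tail_symmetric_nbr:
  assumes dg: "digraph V A" and lsc: "locally_semicomplete V A"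
    and nb: "\<not> has_induced V A 4 F_b" and nc: "\<not> has_induced V A 4 F_c"
    and nd: "\<not> has_induced V A 3 F_d"
    and v: "di_simplicial V (sym_part A) v"
    and xv: "nonsymmetric_arc A x v" and vw: "(v, w) \<in> A" and xw: "(x, w) \<notin> A"
    and xy: "symmetric_arc A x y"
  shows "nonsymmetric_arc A y v \<and> (y, w) \<notin> A \<or> symmetric_arc A y w"
proof -
  have arcs: "(x, v) \<in> A" "(v, x) \<notin> A" "(x, y) \<in> A" "(y, x) \<in> A"
    using xv xy unfolding nonsymmetric_arc_def symmetric_arc_def by auto
  have V: "x \<in> V" "v \<in> V" "y \<in> V" using arcs digraph_arcD[OF dg] by auto
  have "x \<noteq> w" "y \<noteq> w" "y \<noteq> v" using arcs vw xw by auto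
  have yv_adjacent: "(y, v) \<in> A \<or> (v, y) \<in> A"
    using locally_semicomplete_out_nbrsD[OF lsc V(1) arcs(3,1) \<open>y \<noteq> v\<close>] .
  have vw_symmetric: "symmetric_arc A v w" if "(w, x) \<in> A"
  proof (rule ccontr)
    assume "\<not> symmetric_arc A v w"
    then have "has_induced V A 3 F_d"
      using that vw xw xv by (intro has_induced_F_dI[OF dg, of x v w])
        (auto simp: nonsymmetric_arc_def symmetric_arc_def)
    with nd show False ..
  qed
  show ?thesis
  proof (cases "(v, y) \<in> A")
    case False
    with yv_adjacent have yv: "nonsymmetric_arc A y v" by (simp add: nonsymmetric_arc_def)
    show ?thesis
    proof (rule ccontr)
      assume "\<not> ?thesis"
      with yv have yw: "nonsymmetric_arc A y w" by (auto simp: nonsymmetric_arc_def symmetric_arc_def)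
      then have "(w, x) \<in> A"
        using locally_semicomplete_out_nbrsD[OF lsc V(3) arcs(4), of w] \<open>x \<noteq> w\<close> xw
        by (auto simp: nonsymmetric_arc_def)
      then have "has_induced V A 4 F_c"
        using vw_symmetric xw xv yv yw xy
        by (intro has_induced_F_cI[OF dg, of w x v y]) (auto simp: nonsymmetric_arc_def symmetric_arc_def)
      with nc show False ..
    qed
  next
    case True
    have yw_adjacent: "(y, w) \<in> A \<or> (w, y) \<in> A"
      using locally_semicomplete_out_nbrsD[OF lsc V(2) True vw \<open>y \<noteq> w\<close>] .
    show ?thesis
    proof (rule ccontr)
      assume "\<not> ?thesis"
      then have yw_nonsym: "\<not> symmetric_arc A y w" by blast
      have "(w, x) \<in> A"
        using yw_adjacent locally_semicomplete_out_nbrsD[OF lsc V(3) arcs(4), of w]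
          locally_semicomplete_in_nbrsD[OF lsc V(3) arcs(3), of w] \<open>x \<noteq> w\<close> xw by blast
      then have vw_sym: "symmetric_arc A v w" by (rule vw_symmetric)
      have "(y, v) \<notin> A"
      proof
        assume "(y, v) \<in> A"
        with True have "symmetric_arc A v y" by (simp add: symmetric_arc_def)
        then have "(y, w) \<in> A" "(w, y) \<in> A"
          using di_simplicial_sym_partD[OF v] vw_sym \<open>y \<noteq> w\<close> by blast+
        with yw_nonsym show False by (simp add: symmetric_arc_def)
      qed
      with True have vy: "nonsymmetric_arc A v y" by (simp add: nonsymmetric_arc_def)
      from yw_adjacent yw_nonsym
      consider "nonsymmetric_arc A y w" | "nonsymmetric_arc A w y"
        by (auto simp: nonsymmetric_arc_def symmetric_arc_def)
      then show False
      proof cases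
        case 1
        then have "has_induced V A 4 F_b"
          using \<open>(w, x) \<in> A\<close> xw xv vy xy vw_sym
          by (intro has_induced_F_bI[OF dg, of x v y w]) (auto simp: nonsymmetric_arc_def symmetric_arc_def)
        with nb show False ..
      next
        case 2
        then have "has_induced V A 4 F_c"
          using \<open>(w, x) \<in> A\<close> xw xv vy xy vw_sym
          by (intro has_induced_F_cI[OF dg, of x v y w]) (auto simp: nonsymmetric_arc_def symmetric_arc_def)
        with nc show False ..
      qed
    qed
  qed
qed

lemma violating_triple_simplicial_tail:
  assumes dg: "digraph V A" and lsc: "locally_semicomplete V A"
    and chordal: "chordal V (sym_part A)"
    and nb: "\<not> has_induced V A 4 F_b" and nc: "\<not> has_induced V A 4 F_c"
    and nd: "\<not> has_induced V A 3 F_d"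
    and uvw: "violating_triple V A u v w" and uv: "nonsymmetric_arc A u v"
  shows "\<exists>u'. di_simplicial V (sym_part A) u' \<and> violating_triple V A u' v w \<and> nonsymmetric_arc A u' v"
proof -
  let ?S = "sym_part A"
  have v: "di_simplicial V ?S v" and vw: "(v, w) \<in> A" and "u \<noteq> w" "(u, w) \<notin> A"
    using uvw unfolding violating_triple_def out_nbrs_def by auto
  define X where "X = {x. nonsymmetric_arc A x v \<and> (x, w) \<notin> A}"
  define W where "W = X \<union> {y \<in> V. y = w \<or> (w, y) \<in> ?S}"
  have "W \<subseteq> V"
    using digraph_arcD[OF dg] unfolding W_def X_def nonsymmetric_arc_def by blast
  then have "finite W" "chordal W ?S"
    using dg chordal_subset[OF chordal] finite_subset by (auto simp: digraph_def)
  moreover have "w \<in> W" "u \<in> W" "(w, u) \<notin> ?S"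
    using digraph_arcD[OF dg vw] uv \<open>(u, w) \<notin> A\<close> by (auto simp: W_def X_def sym_part_def)
  ultimately obtain a where a: "a \<in> W" "a \<noteq> w" "(w, a) \<notin> ?S" "simplicial ?S W a"
    using simplicial_outside_closed_nbhd[OF _ _ sym_sym_part] \<open>u \<noteq> w\<close> by metis
  then have "a \<in> X" unfolding W_def by blast
  then have av: "nonsymmetric_arc A a v" and aw: "(a, w) \<notin> A" by (simp_all add: X_def)
  have "{p. (a, p) \<in> ?S} \<subseteq> W"
  proof
    fix p assume "p \<in> {p. (a, p) \<in> ?S}"
    then have "symmetric_arc A a p" by (simp add: sym_part_def symmetric_arc_def)
    with violating_tail_symmetric_nbr[OF dg lsc nb nc nd v av vw aw]
    have "nonsymmetric_arc A p v \<and> (p, w) \<notin> A \<or> symmetric_arc A p w" .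
    moreover have "p \<in> V" using \<open>symmetric_arc A a p\<close> digraph_arcD[OF dg]
      by (auto simp: symmetric_arc_def)
    ultimately show "p \<in> W" by (auto simp: W_def X_def sym_part_def symmetric_arc_def)
  qed
  then have "di_simplicial V ?S a"
    using di_simplicial_if_simplicial[OF a(4) sym_sym_part \<open>W \<subseteq> V\<close>] by blast
  moreover have "violating_triple V A a v w"
    using v vw av aw a(2) by (simp add: violating_triple_def in_nbrs_def out_nbrs_def nonsymmetric_arc_def)
  ultimately show ?thesis using av by blast
qed

lemma digraph_converse [simp]: "digraph V (A\<inverse>) \<longleftrightarrow> digraph V A"
  by (auto simp: digraph_def)

lemma in_nbrs_converse [simp]: "in_nbrs (A\<inverse>) v = out_nbrs A v"
  by (simp add: in_nbrs_def out_nbrs_def)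

lemma out_nbrs_converse [simp]: "out_nbrs (A\<inverse>) v = in_nbrs A v"
  by (simp add: in_nbrs_def out_nbrs_def)

lemma semicomplete_converse [simp]: "semicomplete X (A\<inverse>) \<longleftrightarrow> semicomplete X A"
  by (auto simp: semicomplete_def)

lemma locally_semicomplete_converse [simp]: "locally_semicomplete V (A\<inverse>) \<longleftrightarrow> locally_semicomplete V A"
  by (auto simp: locally_semicomplete_def)

lemma sym_part_converse [simp]: "sym_part (A\<inverse>) = sym_part A"
  by (auto simp: sym_part_def)

lemma nonsymmetric_arc_converse [simp]: "nonsymmetric_arc (A\<inverse>) x y \<longleftrightarrow> nonsymmetric_arc A y x"
  by (simp add: nonsymmetric_arc_def)

lemma violating_triple_converse [simp]: "violating_triple V (A\<inverse>) w v u \<longleftrightarrow> violating_triple V A u v w"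
  by (auto simp: violating_triple_def)

theorem lemma2p3:
  fixes V :: "'a set" and A :: "('a \<times> 'a) set" and u v w :: 'a
  assumes "digraph V A"
    and "locally_semicomplete V A"
    and "chordal V (sym_part A)"
    and "\<not> (\<exists>vs. induced_nonsym_cycle V A vs)"
    and "\<not> has_induced V A 4 F_a" and "\<not> has_induced V A 4 F_b"
    and "\<not> has_induced V A 4 F_c" and "\<not> has_induced V A 3 F_d"
    and "violating_triple V A u v w"
  shows "(nonsymmetric_arc A u v \<longrightarrow>
            (\<exists>u'. di_simplicial V (sym_part A) u' \<and> violating_triple V A u' v w
                  \<and> nonsymmetric_arc A u' v))
       \<and> (nonsymmetric_arc A v w \<longrightarrow>
            (\<exists>w'. di_simplicial V (sym_part A) w' \<and> violating_triple V A u v w'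
                  \<and> nonsymmetric_arc A v w'))"
proof (intro conjI impI)
  assume "nonsymmetric_arc A u v"
  with violating_triple_simplicial_tail[OF assms(1-3,6-9)]
  show "\<exists>u'. di_simplicial V (sym_part A) u' \<and> violating_triple V A u' v w \<and> nonsymmetric_arc A u' v" .
next
  assume "nonsymmetric_arc A v w"
  have "\<exists>w'. di_simplicial V (sym_part (A\<inverse>)) w' \<and> violating_triple V (A\<inverse>) w' v u
      \<and> nonsymmetric_arc (A\<inverse>) w' v"
    by (rule violating_triple_simplicial_tail) (use assms \<open>nonsymmetric_arc A v w\<close> in simp_all)
  then show "\<exists>w'. di_simplicial V (sym_part A) w' \<and> violating_triple V A u v w' \<and> nonsymmetric_arc A v w'"
    by simp
qed

end
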